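(* (a) Let $\Gamma$ be a perfect matching drawing containing a matching edge $e=uv$ inside a disk $D$ that meets $\Gamma$ only in $e$, its endpoints, and initial segments of the four other edges at $u$ and $v$. Let the edge-ends of these other edges be $\alpha,\beta$ at $u$ and $\gamma,\delta$ at $v$, in cyclic order $\alpha,\beta,\delta,\gamma$ around $\partial D$. Let $\Gamma_H$ be obtained by the IH-move at $e$: inside $D$, replace $u,v,e$ by new vertices $u',v'$ and a new matching edge $e'=u'v'$, with $\alpha,\gamma$ attached to $u'$ and $\beta,\delta$ attached to $v'$. Let $\Gamma_{\mathrm{I}}$ be obtained from $\Gamma$ by replacing the contents of $D$ with two disjoint arcs joining $\alpha$ to $\gamma$ and $\beta$ to $\delta$, and let $\Gamma_{=}$ be obtained by replacing the contents of $D$ with two disjoint arcs joining $\alpha$ to $\beta$ and $\gamma$ to $\delta$. Then $$\langle\Gamma\rangle_2-\langle\Gamma_H\rangle_2=\langle\Gamma_{\mathrm{I}}\rangle_2-\langle\Gamma_{=}\rangle_2.$$ (b) Let $G_1$ be a planar trivalent graph with perfect matching $M_1$, and perform the same local constructions on a plane embedding, at a matching edge $e=uv$ as in (a), producing a plane graph $G_2$ with perfect matching $M_2=(M_1\setminus\{e\})\cup\{e'\}$ (the IH-move), a plane graph $G_3$ (delete $u,v,e$ and join the edges ending in $\alpha,\gamma$ into one edge and the edges ending in $\beta,\delta$ into one edge) with perfect matching $M_3=M_1\setminus\{e\}$, and a plane graph $G_4$ (delete $u,v,e$ and join the edges ending in $\alpha,\beta$ into one edge and those ending in $\gamma,\delta$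 into one edge) with perfect matching $M_4=M_1\setminus\{e\}$. Then $$|G_1:M_1|_2-|G_2:M_2|_2=|G_3:M_3|_2-|G_4:M_4|_2.$$
   Context: Graphs are finite and may have multiple edges; trivalent means every vertex has degree $3$. $|G:M|_2$ denotes the number of $2$-factors (spanning subgraphs in which every vertex has degree $2$) of $G$ that contain every edge of $M$. A perfect matching drawing $\Gamma$ is a collection of trivalent vertices, edges and vertex-free closed curves drawn in the $2$-sphere by a generic immersion (transverse double points away from vertices, carrying no extra data), together with a set $M$ of edges forming a perfect matching of the vertices. For a matching edge $e=uv$ with other edge-ends $\alpha,\beta$ at $u$ and $\gamma,\delta$ at $v$ in cyclic order $\alpha,\beta,\delta,\gamma$ around a small disk about $e$, the $0$-resolution deletes $e,u,v$ and joins $\alpha$–$\gamma$ and $\beta$–$\delta$ by disjoint arcs, and the $1$-resolution joins $\alpha$–$\delta$ and $\beta$–$\gamma$ by two arcs crossing once. For a state $s:M\to\{0,1\}$, resolving every matching edge gives $c(s)$ immersed closed curves, and the $2$-factor bracket is $\langle\Gamma\rangle_2(z)=\sum_s(-z)^{|s|}(z+z^{-1})^{c(s)}\in\mathbb{Z}[z,z^{-1}]$, $|s|$ being the number of edges assigned $1$. *)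

theory Defs
  imports Main "HOL-Library.FuncSet" "HOL-Computational_Algebra.Formal_Laurent_Series"
begin

text \<open>Points ('p) are marked points on the non-matching edges / closed curves
  (in particular the four edge-ends around each matching edge).
  arcs: arcs of the drawing joining two points (non-matching edges, pieces of
  curves); medges: the matching edges, each with its quadruple
  quad e = (a,b,c,d): a,b are the other edge-ends at the first endpoint u,
  c,d those at the second endpoint v, in cyclic order a,b,d,c around a small
  disk about e.  nloops: number of vertex-free closed curves not passing
  through any point.  Crossings carry no data and are not recorded.\<close>

type_synonym 'p quad = "'p \<times> 'p \<times> 'p \<times> 'p"

record ('p, 'e) pmdrawing =
  pts :: "'p set"
  arcs :: "('p \<times> 'p) list"
  medges :: "'e set"
  quad :: "'e \<Rightarrow> 'p quad"
  nloops :: nat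

fun qset :: "'p quad \<Rightarrow> 'p set" where
  "qset (a, b, c, d) = {a, b, c, d}"

fun qdistinct :: "'p quad \<Rightarrow> bool" where
  "qdistinct (a, b, c, d) = distinct [a, b, c, d]"

definition arc_deg :: "('p \<times> 'p) list \<Rightarrow> 'p \<Rightarrow> nat" where
  "arc_deg A p = length (filter (\<lambda>(x, y). x = p) A) + length (filter (\<lambda>(x, y). y = p) A)"

text \<open>Well-formedness: every point lies on exactly two strands (arc ends or
  slots at matching edges), so that every resolution is a union of closed curves.\<close>
definition pm_drawing :: "('p, 'e, 'z) pmdrawing_scheme \<Rightarrow> bool" where
  "pm_drawing \<Gamma> \<longleftrightarrow> finite (pts \<Gamma>) \<and> finite (medges \<Gamma>) \<and>
     (\<forall>(x, y) \<in> set (arcs \<Gamma>). x \<in> pts \<Gamma> \<and> y \<in> pts \<Gamma>) \<and>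
     (\<forall>e \<in> medges \<Gamma>. qdistinct (quad \<Gamma> e) \<and> qset (quad \<Gamma> e) \<subseteq> pts \<Gamma>) \<and>
     (\<forall>p \<in> pts \<Gamma>. arc_deg (arcs \<Gamma>) p + card {e \<in> medges \<Gamma>. p \<in> qset (quad \<Gamma> e)} = 2)"

fun res0 :: "'p quad \<Rightarrow> ('p \<times> 'p) set" where
  "res0 (a, b, c, d) = {(a, c), (c, a), (b, d), (d, b)}"

fun res1 :: "'p quad \<Rightarrow> ('p \<times> 'p) set" where
  "res1 (a, b, c, d) = {(a, d), (d, a), (b, c), (c, b)}"

definition curve_rel :: "('p, 'e, 'z) pmdrawing_scheme \<Rightarrow> ('e \<Rightarrow> bool) \<Rightarrow> ('p \<times> 'p) set" where
  "curve_rel \<Gamma> s = {(x, y). (x, y) \<in> set (arcs \<Gamma>) \<or> (y, x) \<in> set (arcs \<Gamma>)} \<union>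
     (\<Union>e \<in> medges \<Gamma>. if s e then res1 (quad \<Gamma> e) else res0 (quad \<Gamma> e))"

definition ncurves :: "('p, 'e, 'z) pmdrawing_scheme \<Rightarrow> ('e \<Rightarrow> bool) \<Rightarrow> nat" where
  "ncurves \<Gamma> s = nloops \<Gamma> + card (pts \<Gamma> // (curve_rel \<Gamma> s)\<^sup>*)"

definition states :: "('p, 'e, 'z) pmdrawing_scheme \<Rightarrow> ('e \<Rightarrow> bool) set" where
  "states \<Gamma> = Pi\<^sub>E (medges \<Gamma>) (\<lambda>_. UNIV)"

text \<open>The 2-factor bracket, an element of Z[z,z^-1] (z = fls_X).\<close>
definition bracket2 :: "('p, 'e, 'z) pmdrawing_scheme \<Rightarrow> int fls" where
  "bracket2 \<Gamma> = (\<Sum>s \<in> states \<Gamma>.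
      (- fls_X) ^ card {e \<in> medges \<Gamma>. s e} * (fls_X + fls_X_inv) ^ ncurves \<Gamma> s)"

record ('v, 'h) dgraph =
  verts :: "'v set"
  darts :: "'h set"
  vert :: "'h \<Rightarrow> 'v"
  opp :: "'h \<Rightarrow> 'h"

text \<open>Edges are the orbits {h, opp h}; loops and multiple edges allowed.\<close>
definition multigraph :: "('v, 'h) dgraph \<Rightarrow> bool" where
  "multigraph G \<longleftrightarrow> finite (verts G) \<and> finite (darts G) \<and>
     (\<forall>h \<in> darts G. vert G h \<in> verts G \<and> opp G h \<in> darts G \<and> opp G h \<noteq> h \<and> opp G (opp G h) = h)"

definition darts_at :: "('v, 'h) dgraph \<Rightarrow> 'v \<Rightarrow> 'h set" where
  "darts_at G v = {h \<in> darts G. vert G h = v}"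

definition trivalent :: "('v, 'h) dgraph \<Rightarrow> bool" where
  "trivalent G \<longleftrightarrow> (\<forall>v \<in> verts G. card (darts_at G v) = 3)"

text \<open>A set of edges (spanning subgraph) is represented by its set of darts.\<close>
definition edge_set :: "('v, 'h) dgraph \<Rightarrow> 'h set \<Rightarrow> bool" where
  "edge_set G F \<longleftrightarrow> F \<subseteq> darts G \<and> (\<forall>h \<in> F. opp G h \<in> F)"

definition perfect_matching :: "('v, 'h) dgraph \<Rightarrow> 'h set \<Rightarrow> bool" where
  "perfect_matching G M \<longleftrightarrow> edge_set G M \<and> (\<forall>v \<in> verts G. card (darts_at G v \<inter> M) = 1)"

definition two_factor :: "('v, 'h) dgraph \<Rightarrow> 'h set \<Rightarrow> bool" where
  "two_factor G F \<longleftrightarrow> edge_set G F \<and> (\<forall>v \<in> verts G. card (darts_at G v \<inter> F) = 2)"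

definition num_2factors :: "('v, 'h) dgraph \<Rightarrow> 'h set \<Rightarrow> nat" where
  "num_2factors G M = card {F. two_factor G F \<and> M \<subseteq> F}"

subsection \<open>Plane embeddings as genus-0 rotation systems (combinatorial maps)\<close>

definition rotation_system :: "('v, 'h) dgraph \<Rightarrow> ('h \<Rightarrow> 'h) \<Rightarrow> bool" where
  "rotation_system G rot \<longleftrightarrow> bij_betw rot (darts G) (darts G) \<and>
     (\<forall>h \<in> darts G. vert G (rot h) = vert G h) \<and>
     (\<forall>h \<in> darts G. \<forall>h' \<in> darts G. vert G h = vert G h' \<longrightarrow> (\<exists>n. (rot ^^ n) h = h'))"

definition faces :: "('v, 'h) dgraph \<Rightarrow> ('h \<Rightarrow> 'h) \<Rightarrow> 'h set set" where
  "faces G rot = {{((rot \<circ> opp G) ^^ n) h | n. True} | h. h \<in> darts G}"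

definition vconn :: "('v, 'h) dgraph \<Rightarrow> ('v \<times> 'v) set" where
  "vconn G = {(vert G h, vert G (opp G h)) | h. h \<in> darts G}\<^sup>*"

definition ncomponents :: "('v, 'h) dgraph \<Rightarrow> nat" where
  "ncomponents G = card (verts G // vconn G)"

definition plane_embedding :: "('v, 'h) dgraph \<Rightarrow> ('h \<Rightarrow> 'h) \<Rightarrow> bool" where
  "plane_embedding G rot \<longleftrightarrow> rotation_system G rot \<and>
     int (card (verts G)) - int (card (darts G) div 2) + int (card (faces G rot))
       = 2 * int (ncomponents G)"

text \<open>j pairs the four removed darts R; the new opposite of a dart h follows
  its edge into R, jumps along the joining arc, and continues until it leaves R.\<close>
definition splice :: "('h \<Rightarrow> 'h) \<Rightarrow> 'h set \<Rightarrow> ('h \<Rightarrow> 'h) \<Rightarrow> 'h \<Rightarrow> 'h" where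
  "splice op R j h = (let x = op h in if x \<notin> R then x else
      let y = op (j x) in if y \<notin> R then y else op (j y))"

text \<open>Joining creates a vertex-free closed curve (so the result is no graph).\<close>
definition splice_closes :: "('h \<Rightarrow> 'h) \<Rightarrow> 'h set \<Rightarrow> ('h \<Rightarrow> 'h) \<Rightarrow> bool" where
  "splice_closes op R j \<longleftrightarrow>
     (\<exists>x \<in> R. op (j x) = x \<or> (op (j x) \<in> R \<and> op (j (op (j x))) = x))"

definition pairswap :: "'h \<Rightarrow> 'h \<Rightarrow> 'h \<Rightarrow> 'h \<Rightarrow> 'h \<Rightarrow> 'h" where
  "pairswap a b c d x = (if x = a then b else if x = b then a else
                         if x = c then d else if x = d then c else x)"

text \<open>Delete the matching edge (darts eu at u, ev at v) together with u, v and
  join the edges ending in a,b and those ending in c,d.\<close>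
definition join_graph :: "('v, 'h) dgraph \<Rightarrow> 'v \<Rightarrow> 'v \<Rightarrow> 'h \<Rightarrow> 'h \<Rightarrow>
    'h \<Rightarrow> 'h \<Rightarrow> 'h \<Rightarrow> 'h \<Rightarrow> ('v, 'h) dgraph" where
  "join_graph G u v eu ev a b c d =
     \<lparr> verts = verts G - {u, v},
       darts = darts G - {eu, ev, a, b, c, d},
       vert = vert G,
       opp = splice (opp G) {a, b, c, d} (pairswap a b c d) \<rparr>"

end

theory Submission
  imports Defs
begin

text \<open>Both identities come from resolving the matching edge e.  Splitting the state
  sum of the bracket by the value of the state at e gives a skein relation expressing
  the bracket as the bracket of the 0-resolution minus z times that of the 1-resolution.
  The 0-resolutions of the drawing and of its IH-move are the I- and =-drawings, while
  their 1-resolutions coincide, which gives (a).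

  For (b), a 2-factor containing the matching consists of e, a set X of darts away from
  u and v, and one further end at u and one at v.  Summing over X, both sides become
  sums of local contributions at the four ends, and these agree by a case analysis on
  how the edges at the ends continue.\<close>

lemma sum_states_split_at:
  assumes "e \<in> medges \<Gamma>"
  shows "sum f (states \<Gamma>) =
    (\<Sum>t\<in>states (\<Gamma>\<lparr>medges := medges \<Gamma> - {e}\<rparr>). f (t(e := False))) +
    (\<Sum>t\<in>states (\<Gamma>\<lparr>medges := medges \<Gamma> - {e}\<rparr>). f (t(e := True)))"
proof -
  let ?N = "medges \<Gamma> - {e}"
  have "states \<Gamma> = (\<lambda>(b, t). t(e := b)) ` (UNIV \<times> Pi\<^sub>E ?N (\<lambda>_. UNIV))"
    unfolding states_def using assms by (metis PiE_insert_eq insert_Diff)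
  then have "sum f (states \<Gamma>) = (\<Sum>(b, t)\<in>UNIV \<times> Pi\<^sub>E ?N (\<lambda>_. UNIV). f (t(e := b)))"
    using sum.reindex[OF inj_combinator[of e ?N "\<lambda>_. UNIV"], of f] by (simp add: split_def)
  also have "\<dots> = (\<Sum>b\<in>UNIV. \<Sum>t\<in>Pi\<^sub>E ?N (\<lambda>_. UNIV). f (t(e := b)))"
    by (simp add: sum.cartesian_product)
  finally show ?thesis by (simp add: states_def UNIV_bool add.commute)
qed

lemma card_fun_upd_true:
  assumes "finite N" "e \<in> N"
  shows "card {e' \<in> N. (t(e := b)) e'} = card {e' \<in> N - {e}. t e'} + of_bool b"
proof -
  have "{e' \<in> N. (t(e := b)) e'} = (if b then insert e {e' \<in> N - {e}. t e'} else {e' \<in> N - {e}. t e'})"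
    using assms(2) by auto
  then show ?thesis using assms(1) by simp
qed

lemma curve_rel_resolve:
  assumes e: "e \<in> medges \<Gamma>"
    and res: "(if b then res1 (quad \<Gamma> e) else res0 (quad \<Gamma> e)) = {(a, c), (c, a), (b', d), (d, b')}"
  shows "curve_rel \<Gamma> (t(e := b)) =
    curve_rel (\<Gamma>\<lparr>arcs := arcs \<Gamma> @ [(a, c), (b', d)], medges := medges \<Gamma> - {e}\<rparr>) t"
proof -
  define r where "r s e' = (if s e' then res1 (quad \<Gamma> e') else res0 (quad \<Gamma> e'))" for s e'
  have "(\<Union>e' \<in> medges \<Gamma>. r (t(e := b)) e') = r (t(e := b)) e \<union> (\<Union>e' \<in> medges \<Gamma> - {e}. r (t(e := b)) e')"
    using e by (metis UN_insert insert_Diff)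
  also have "\<dots> = {(a, c), (c, a), (b', d), (d, b')} \<union> (\<Union>e' \<in> medges \<Gamma> - {e}. r t e')"
    using res by (simp add: r_def)
  finally show ?thesis unfolding curve_rel_def r_def by auto
qed

lemma bracket2_skein:
  assumes fin: "finite (medges \<Gamma>)" and e: "e \<in> medges \<Gamma>"
    and r0: "res0 (quad \<Gamma> e) = {(a0, c0), (c0, a0), (b0, d0), (d0, b0)}"
    and r1: "res1 (quad \<Gamma> e) = {(a1, c1), (c1, a1), (b1, d1), (d1, b1)}"
  shows "bracket2 \<Gamma> =
    bracket2 (\<Gamma>\<lparr>arcs := arcs \<Gamma> @ [(a0, c0), (b0, d0)], medges := medges \<Gamma> - {e}\<rparr>)
    - fls_X * bracket2 (\<Gamma>\<lparr>arcs := arcs \<Gamma> @ [(a1, c1), (b1, d1)], medges := medges \<Gamma> - {e}\<rparr>)"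
proof -
  have "ncurves \<Gamma> (t(e := False)) =
      ncurves (\<Gamma>\<lparr>arcs := arcs \<Gamma> @ [(a0, c0), (b0, d0)], medges := medges \<Gamma> - {e}\<rparr>) t"
    and "ncurves \<Gamma> (t(e := True)) =
      ncurves (\<Gamma>\<lparr>arcs := arcs \<Gamma> @ [(a1, c1), (b1, d1)], medges := medges \<Gamma> - {e}\<rparr>) t" for t
    using curve_rel_resolve[OF e, of False a0 c0 b0 d0 t] curve_rel_resolve[OF e, of True a1 c1 b1 d1 t]
    by (simp_all add: ncurves_def r0 r1)
  then show ?thesis
    unfolding bracket2_def sum_states_split_at[OF e] card_fun_upd_true[OF fin e]
    by (simp add: states_def sum_distrib_left sum_negf algebra_simps)
qed

lemma bracket2_quad_update_unused:
  assumes "e \<notin> medges \<Gamma>"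
  shows "bracket2 (\<Gamma>\<lparr>quad := (quad \<Gamma>)(e := q)\<rparr>) = bracket2 \<Gamma>"
proof -
  have "curve_rel (\<Gamma>\<lparr>quad := (quad \<Gamma>)(e := q)\<rparr>) s = curve_rel \<Gamma> s" for s
  proof -
    have "(\<Union>x \<in> medges \<Gamma>. if s x then res1 (((quad \<Gamma>)(e := q)) x) else res0 (((quad \<Gamma>)(e := q)) x))
        = (\<Union>x \<in> medges \<Gamma>. if s x then res1 (quad \<Gamma> x) else res0 (quad \<Gamma> x))"
      by (rule SUP_cong) (use assms in auto)
    then show ?thesis by (simp add: curve_rel_def)
  qed
  then show ?thesis by (simp add: bracket2_def ncurves_def states_def)
qed

lemma bracket2_IH_move:
  assumes "pm_drawing \<Gamma>" "e \<in> medges \<Gamma>" "quad \<Gamma> e = (\<alpha>, \<beta>, \<gamma>, \<delta>)"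
  shows "bracket2 \<Gamma> - bracket2 (\<Gamma>\<lparr>quad := (quad \<Gamma>)(e := (\<gamma>, \<alpha>, \<delta>, \<beta>))\<rparr>)
      = bracket2 (\<Gamma>\<lparr>arcs := arcs \<Gamma> @ [(\<alpha>, \<gamma>), (\<beta>, \<delta>)], medges := medges \<Gamma> - {e}\<rparr>)
        - bracket2 (\<Gamma>\<lparr>arcs := arcs \<Gamma> @ [(\<alpha>, \<beta>), (\<gamma>, \<delta>)], medges := medges \<Gamma> - {e}\<rparr>)"
proof -
  define H where "H = \<Gamma>\<lparr>quad := (quad \<Gamma>)(e := (\<gamma>, \<alpha>, \<delta>, \<beta>))\<rparr>"
  define X where "X = \<Gamma>\<lparr>arcs := arcs \<Gamma> @ [(\<alpha>, \<delta>), (\<beta>, \<gamma>)], medges := medges \<Gamma> - {e}\<rparr>"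
  have fin: "finite (medges \<Gamma>)" using assms(1) by (simp add: pm_drawing_def)
  have "bracket2 \<Gamma> = bracket2 (\<Gamma>\<lparr>arcs := arcs \<Gamma> @ [(\<alpha>, \<gamma>), (\<beta>, \<delta>)], medges := medges \<Gamma> - {e}\<rparr>)
      - fls_X * bracket2 X"
    unfolding X_def by (rule bracket2_skein[OF fin assms(2)]) (auto simp: assms(3))
  moreover have "bracket2 H = bracket2 (H\<lparr>arcs := arcs H @ [(\<alpha>, \<beta>), (\<gamma>, \<delta>)], medges := medges H - {e}\<rparr>)
      - fls_X * bracket2 (H\<lparr>arcs := arcs H @ [(\<alpha>, \<delta>), (\<beta>, \<gamma>)], medges := medges H - {e}\<rparr>)"
    by (rule bracket2_skein) (use fin assms(2) in \<open>auto simp: H_def\<close>)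
  moreover have "bracket2 (H\<lparr>arcs := A, medges := medges \<Gamma> - {e}\<rparr>) =
      bracket2 (\<Gamma>\<lparr>arcs := A, medges := medges \<Gamma> - {e}\<rparr>)" for A
  proof -
    have "H\<lparr>arcs := A, medges := medges \<Gamma> - {e}\<rparr> =
        (\<Gamma>\<lparr>arcs := A, medges := medges \<Gamma> - {e}\<rparr>)\<lparr>quad := (quad \<Gamma>)(e := (\<gamma>, \<alpha>, \<delta>, \<beta>))\<rparr>"
      by (cases \<Gamma>) (simp add: H_def)
    then show ?thesis
      using bracket2_quad_update_unused[of e "\<Gamma>\<lparr>arcs := A, medges := medges \<Gamma> - {e}\<rparr>"] by simp
  qed
  ultimately show ?thesis by (simp add: H_def X_def)
qed

text \<open>Closure of X at the ends R: after adding the chosen ends P, respectively after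
  joining the ends by the arcs j.\<close>
definition compatible_ends :: "('h \<Rightarrow> 'h) \<Rightarrow> 'h set \<Rightarrow> 'h set \<Rightarrow> 'h set \<Rightarrow> bool" where
  "compatible_ends f R X P \<longleftrightarrow> (\<forall>r\<in>R. f r \<in> X \<longrightarrow> r \<in> P) \<and> (\<forall>r\<in>P. f r \<in> X \<or> f r \<in> P)"

definition joins_compatible :: "('h \<Rightarrow> 'h) \<Rightarrow> 'h set \<Rightarrow> ('h \<Rightarrow> 'h) \<Rightarrow> 'h set \<Rightarrow> bool" where
  "joins_compatible f R j X \<longleftrightarrow> (\<forall>r\<in>R. f r \<in> X \<longrightarrow> splice f R j (f r) \<in> X)"

text \<open>X is the trace, away from the vertices U, of a 2-factor containing N; only
  edges running into the darts R may leave X.\<close>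
definition two_factor_off :: "('v, 'h) dgraph \<Rightarrow> 'h set \<Rightarrow> 'v set \<Rightarrow> 'h set \<Rightarrow> 'h set \<Rightarrow> bool" where
  "two_factor_off H N U R X \<longleftrightarrow> N \<subseteq> X \<and> (\<forall>w \<in> verts H - U. card (darts_at H w \<inter> X) = 2) \<and>
     (\<forall>h\<in>X. opp H h \<notin> R \<longrightarrow> opp H h \<in> X)"

lemma closed_union_iff:
  assumes ff: "\<forall>h\<in>X \<union> R. f (f h) = h" and XR: "X \<inter> R = {}" and PR: "P \<subseteq> R"
  shows "(\<forall>h\<in>X \<union> P. f h \<in> X \<union> P) \<longleftrightarrow> (\<forall>h\<in>X. f h \<notin> R \<longrightarrow> f h \<in> X) \<and> compatible_ends f R X P"
proof
  assume H: "\<forall>h\<in>X \<union> P. f h \<in> X \<union> P"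
  have "r \<in> P" if "r \<in> R" "f r \<in> X" for r
    using H ff XR that by (metis Un_iff disjoint_iff)
  then show "(\<forall>h\<in>X. f h \<notin> R \<longrightarrow> f h \<in> X) \<and> compatible_ends f R X P"
    using H PR unfolding compatible_ends_def by blast
next
  assume H: "(\<forall>h\<in>X. f h \<notin> R \<longrightarrow> f h \<in> X) \<and> compatible_ends f R X P"
  have "f h \<in> X \<union> P" if "h \<in> X" "f h \<in> R" for h
    using H ff that unfolding compatible_ends_def by (metis UnCI)
  then show "\<forall>h\<in>X \<union> P. f h \<in> X \<union> P"
    using H unfolding compatible_ends_def by blast
qed

lemma splice_closed_iff:
  assumes ff: "\<forall>h\<in>X \<union> R. f (f h) = h"
  shows "(\<forall>h\<in>X. splice f R j h \<in> X) \<longleftrightarrow> (\<forall>h\<in>X. f h \<notin> R \<longrightarrow> f h \<in> X) \<and> joins_compatible f R j X"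
proof -
  have "splice f R j h = f h" if "f h \<notin> R" for h
    using that by (simp add: splice_def)
  moreover have "splice f R j h \<in> X \<longleftrightarrow> splice f R j (f (f h)) \<in> X" if "h \<in> X" for h
    using ff that by simp
  ultimately show ?thesis
    unfolding joins_compatible_def by (metis (no_types, lifting) UnCI ff)
qed

text \<open>An edge joining two of the four ends closes a vertex-free loop in one of
  the two joins, unless it joins a with d or b with c.\<close>
lemma end_configurations:
  fixes f :: "'h \<Rightarrow> 'h"
  assumes dist: "distinct [a,b,c,d]"
    and inv: "\<forall>r\<in>{a,b,c,d}. f (f r) = r \<and> f r \<noteq> r"
    and nc_I: "\<not> splice_closes f {a,b,c,d} (pairswap a c b d)"
    and nc_eq: "\<not> splice_closes f {a,b,c,d} (pairswap a b c d)"
  shows "(f a \<notin> {a,b,c,d} \<and> f b \<notin> {a,b,c,d} \<and> f c \<notin> {a,b,c,d} \<and> f d \<notin> {a,b,c,d}) \<or>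
         (f a = d \<and> f d = a \<and> f b \<notin> {a,b,c,d} \<and> f c \<notin> {a,b,c,d}) \<or>
         (f b = c \<and> f c = b \<and> f a \<notin> {a,b,c,d} \<and> f d \<notin> {a,b,c,d})"
proof -
  have p_I: "pairswap a c b d a = c" "pairswap a c b d c = a"
      "pairswap a c b d b = d" "pairswap a c b d d = b"
    and p_eq: "pairswap a b c d a = b" "pairswap a b c d b = a"
      "pairswap a b c d c = d" "pairswap a b c d d = c"
    using dist by (auto simp: pairswap_def)
  have n_I: "\<And>x. x \<in> {a,b,c,d} \<Longrightarrow> f (pairswap a c b d x) \<noteq> x"
    using nc_I unfolding splice_closes_def by blast
  have n_eq: "\<And>x. x \<in> {a,b,c,d} \<Longrightarrow> f (pairswap a b c d x) \<noteq> x"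
    using nc_eq unfolding splice_closes_def by blast
  have n_I': "\<And>x. x \<in> {a,b,c,d} \<Longrightarrow> f (pairswap a c b d x) \<in> {a,b,c,d} \<Longrightarrow>
      f (pairswap a c b d (f (pairswap a c b d x))) \<noteq> x"
    using nc_I unfolding splice_closes_def by blast
  have "f a \<noteq> b" using n_eq[of b] p_eq by auto
  moreover have "f a \<noteq> c" using n_I[of c] p_I by auto
  moreover have "f b \<noteq> d" using n_I[of d] p_I by auto
  moreover have "f c \<noteq> d" using n_eq[of d] p_eq by auto
  moreover have "\<not> (f a = d \<and> f b = c)" using n_I'[of a] p_I inv by auto
  ultimately show ?thesis using inv dist by auto
qed

text \<open>When no edge joins two ends, both sides equal
  [T = {a,c}] + [T = {b,d}] - [T = {a,b}] - [T = {c,d}] for T = {r. f r \<in> X}.\<close>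
lemma four_term_identity:
  fixes f :: "'h \<Rightarrow> 'h"
  assumes dist: "distinct [a,b,c,d]"
    and inv: "\<forall>r\<in>{a,b,c,d}. f (f r) = r \<and> f r \<noteq> r"
    and XR: "\<forall>r\<in>{a,b,c,d}. r \<notin> X"
    and nc_I: "\<not> splice_closes f {a,b,c,d} (pairswap a c b d)"
    and nc_eq: "\<not> splice_closes f {a,b,c,d} (pairswap a b c d)"
  shows "of_bool (compatible_ends f {a,b,c,d} X {a,c}) + of_bool (compatible_ends f {a,b,c,d} X {b,d})
       - of_bool (compatible_ends f {a,b,c,d} X {a,b}) - of_bool (compatible_ends f {a,b,c,d} X {c,d})
       = (of_bool (joins_compatible f {a,b,c,d} (pairswap a c b d) X)
          - of_bool (joins_compatible f {a,b,c,d} (pairswap a b c d) X) :: int)"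
proof -
  have p_I: "pairswap a c b d a = c" "pairswap a c b d c = a"
      "pairswap a c b d b = d" "pairswap a c b d d = b"
    and p_eq: "pairswap a b c d a = b" "pairswap a b c d b = a"
      "pairswap a b c d c = d" "pairswap a b c d d = c"
    using dist by (auto simp: pairswap_def)
  have ff: "f (f a) = a" "f (f b) = b" "f (f c) = c" "f (f d) = d" using inv by auto
  from end_configurations[OF dist inv nc_I nc_eq] show ?thesis
  proof (elim disjE conjE)
    assume h: "f a \<notin> {a,b,c,d}" "f b \<notin> {a,b,c,d}" "f c \<notin> {a,b,c,d}" "f d \<notin> {a,b,c,d}"
    show ?thesis
      using h dist XR unfolding compatible_ends_def joins_compatible_def splice_def
      by (cases "f a \<in> X"; cases "f b \<in> X"; cases "f c \<in> X"; cases "f d \<in> X") (auto simp: p_I p_eq ff)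
  next
    assume h: "f a = d" "f d = a" "f b \<notin> {a,b,c,d}" "f c \<notin> {a,b,c,d}"
    show ?thesis
      using h dist XR unfolding compatible_ends_def joins_compatible_def splice_def
      by (cases "f b \<in> X"; cases "f c \<in> X") (auto simp: p_I p_eq ff)
  next
    assume h: "f b = c" "f c = b" "f a \<notin> {a,b,c,d}" "f d \<notin> {a,b,c,d}"
    show ?thesis
      using h dist XR unfolding compatible_ends_def joins_compatible_def splice_def
      by (cases "f a \<in> X"; cases "f d \<in> X") (auto simp: p_I p_eq ff)
  qed
qed

lemma card_eq_sum_Pow_slices:
  assumes "finite D" "finite R" "D \<inter> R = {}" "D \<inter> E = {}" "E \<inter> R = {}"
    and "\<forall>F\<in>A. E \<subseteq> F \<and> F \<subseteq> D \<union> E \<union> R"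
  shows "card A = (\<Sum>X\<in>Pow D. card {P \<in> Pow R. X \<union> E \<union> P \<in> A})"
proof -
  let ?S = "Sigma (Pow D) (\<lambda>X. {P \<in> Pow R. X \<union> E \<union> P \<in> A})"
  have "bij_betw (\<lambda>F. (F \<inter> D, F \<inter> R)) A ?S"
  proof (rule bij_betw_byWitness[where f' = "\<lambda>(X, P). X \<union> E \<union> P"])
    have "F \<inter> D \<union> E \<union> F \<inter> R = F" if "F \<in> A" for F
      using assms(6) that by auto
    then show "\<forall>F\<in>A. (\<lambda>(X, P). X \<union> E \<union> P) (F \<inter> D, F \<inter> R) = F"
      and "(\<lambda>F. (F \<inter> D, F \<inter> R)) ` A \<subseteq> ?S"
      by auto
    show "\<forall>p\<in>?S. (\<lambda>F. (F \<inter> D, F \<inter> R)) ((\<lambda>(X, P). X \<union> E \<union> P) p) = p"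
      using assms(3-5) by auto
    show "(\<lambda>(X, P). X \<union> E \<union> P) ` ?S \<subseteq> A" by auto
  qed
  then have "card A = card ?S" by (rule bij_betw_same_card)
  also have "\<dots> = (\<Sum>X\<in>Pow D. card {P \<in> Pow R. X \<union> E \<union> P \<in> A})"
    using assms(1,2) by (intro card_SigmaI) auto
  finally show ?thesis .
qed

lemma card_filter_four:
  assumes "distinct [A, B, C, D]"
  shows "card {P \<in> {A, B, C, D}. Q P} = of_bool (Q A) + of_bool (Q B) + of_bool (Q C) + of_bool (Q D)"
proof -
  have eq: "{P \<in> {A, B, C, D}. Q P} = (if Q A then {A} else {}) \<union> (if Q B then {B} else {}) \<union>
     (if Q C then {C} else {}) \<union> (if Q D then {D} else {})" by auto
  show ?thesis unfolding eq
    using assms by (cases "Q A"; cases "Q B"; cases "Q C"; cases "Q D") (auto simp: card_insert_if)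
qed

locale matched_edge =
  fixes H :: "('v, 'h) dgraph" and M :: "'h set"
    and eu ev :: 'h and u v :: 'v and x1 x2 y1 y2 :: 'h
  assumes multigraph: "multigraph H"
    and matching_darts: "M \<subseteq> darts H" and eu_in_M: "eu \<in> M" and ev_in_M: "ev \<in> M"
    and opp_eu: "opp H eu = ev"
    and darts_at_u: "darts_at H u = {eu, x1, x2}" and darts_at_v: "darts_at H v = {ev, y1, y2}"
    and distinct_darts: "distinct [eu, ev, x1, x2, y1, y2]"
    and ends_notin_M: "M \<inter> {x1, x2, y1, y2} = {}"
begin

abbreviation ends :: "'h set" where "ends \<equiv> {x1, x2, y1, y2}"

abbreviation outer_darts :: "'h set" where "outer_darts \<equiv> darts H - {eu, ev, x1, x2, y1, y2}"

abbreviation end_choices :: "'h set set" where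
  "end_choices \<equiv> {{x1, y1}, {x1, y2}, {x2, y1}, {x2, y2}}"

lemma opp_opp: "h \<in> darts H \<Longrightarrow> opp H (opp H h) = h"
  using multigraph by (auto simp: multigraph_def)

lemma local_darts: "{eu, x1, x2} \<subseteq> darts H" "{ev, y1, y2} \<subseteq> darts H"
  and vert_u: "h \<in> {eu, x1, x2} \<Longrightarrow> vert H h = u"
  and vert_v: "h \<in> {ev, y1, y2} \<Longrightarrow> vert H h = v"
  using darts_at_u darts_at_v by (auto simp: darts_at_def)

lemma u_neq_v: "u \<noteq> v"
  using darts_at_u darts_at_v distinct_darts by auto

lemma u_v_in_verts: "u \<in> verts H" "v \<in> verts H"
  using multigraph local_darts vert_u vert_v by (auto simp: multigraph_def)

lemma darts_at_other: "w \<notin> {u, v} \<Longrightarrow> darts_at H w \<subseteq> outer_darts"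
  using vert_u vert_v by (auto simp: darts_at_def)

lemma one_end_at_each_iff:
  assumes "P \<subseteq> ends"
  shows "(card (insert eu ({x1, x2} \<inter> P)) = 2 \<and> card (insert ev ({y1, y2} \<inter> P)) = 2) \<longleftrightarrow>
         P \<in> end_choices"
proof
  assume "P \<in> end_choices"
  then show "card (insert eu ({x1, x2} \<inter> P)) = 2 \<and> card (insert ev ({y1, y2} \<inter> P)) = 2"
    using distinct_darts by (elim insertE emptyE) (auto simp: Int_insert_left Int_insert_right)
next
  assume card: "card (insert eu ({x1, x2} \<inter> P)) = 2 \<and> card (insert ev ({y1, y2} \<inter> P)) = 2"
  have "(x1 \<in> P) \<noteq> (x2 \<in> P)" and "(y1 \<in> P) \<noteq> (y2 \<in> P)"
    using card distinct_darts by (auto simp: Int_insert_left card_insert_if split: if_splits)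
  moreover have P: "P = (if x1 \<in> P then {x1} else {}) \<union> (if x2 \<in> P then {x2} else {}) \<union>
      (if y1 \<in> P then {y1} else {}) \<union> (if y2 \<in> P then {y2} else {})"
    using assms by auto
  ultimately show "P \<in> end_choices"
    by (subst P; cases "x1 \<in> P"; cases "y1 \<in> P") (simp_all add: insert_commute)
qed

lemma degree_two_iff:
  assumes X: "X \<subseteq> outer_darts" and P: "P \<subseteq> ends"
  shows "(\<forall>w\<in>verts H. card (darts_at H w \<inter> (X \<union> {eu, ev} \<union> P)) = 2) \<longleftrightarrow>
    (\<forall>w\<in>verts H - {u, v}. card (darts_at H w \<inter> X) = 2) \<and> P \<in> end_choices"
proof -
  let ?F = "X \<union> {eu, ev} \<union> P"
  have other: "darts_at H w \<inter> ?F = darts_at H w \<inter> X" if "w \<noteq> u" "w \<noteq> v" for w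
    using darts_at_other[of w] that P by blast
  have "(\<forall>w\<in>verts H. card (darts_at H w \<inter> ?F) = 2) \<longleftrightarrow>
      card (darts_at H u \<inter> ?F) = 2 \<and> card (darts_at H v \<inter> ?F) = 2 \<and>
      (\<forall>w\<in>verts H - {u, v}. card (darts_at H w \<inter> ?F) = 2)"
    using u_v_in_verts by blast
  also have "\<dots> \<longleftrightarrow> (\<forall>w\<in>verts H - {u, v}. card (darts_at H w \<inter> X) = 2) \<and>
      (card (insert eu ({x1, x2} \<inter> P)) = 2 \<and> card (insert ev ({y1, y2} \<inter> P)) = 2)"
  proof -
    have "darts_at H u \<inter> ?F = insert eu ({x1, x2} \<inter> P)" "darts_at H v \<inter> ?F = insert ev ({y1, y2} \<inter> P)"
      using darts_at_u darts_at_v X distinct_darts by auto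
    then show ?thesis using other by auto
  qed
  finally show ?thesis unfolding one_end_at_each_iff[OF P] .
qed

lemma edge_set_iff:
  assumes X: "X \<subseteq> outer_darts" and P: "P \<subseteq> ends"
  shows "edge_set H (X \<union> {eu, ev} \<union> P) \<longleftrightarrow>
    (\<forall>h\<in>X. opp H h \<notin> ends \<longrightarrow> opp H h \<in> X) \<and> compatible_ends (opp H) ends X P"
proof -
  have opp_ev: "opp H ev = eu"
    using opp_eu opp_opp local_darts by auto
  have "opp H h \<notin> {eu, ev}" if "h \<in> X \<union> P" for h
  proof
    assume "opp H h \<in> {eu, ev}"
    moreover have "h \<in> darts H" "h \<notin> {eu, ev}" using that X P local_darts distinct_darts by auto
    ultimately show False using opp_opp[of h] opp_eu opp_ev by auto
  qed
  then have "edge_set H (X \<union> {eu, ev} \<union> P) \<longleftrightarrow> (\<forall>h\<in>X \<union> P. opp H h \<in> X \<union> P)"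
    unfolding edge_set_def using X P local_darts opp_eu opp_ev by auto
  also have "\<dots> \<longleftrightarrow> (\<forall>h\<in>X. opp H h \<notin> ends \<longrightarrow> opp H h \<in> X) \<and> compatible_ends (opp H) ends X P"
    by (rule closed_union_iff) (use X P local_darts opp_opp in auto)
  finally show ?thesis .
qed

lemma two_factor_extension_iff:
  assumes X: "X \<subseteq> outer_darts" and P: "P \<subseteq> ends"
  shows "two_factor H (X \<union> {eu, ev} \<union> P) \<and> M \<subseteq> X \<union> {eu, ev} \<union> P \<longleftrightarrow>
    two_factor_off H (M - {eu, ev}) {u, v} ends X \<and> compatible_ends (opp H) ends X P \<and> P \<in> end_choices"
proof -
  have "M \<subseteq> X \<union> {eu, ev} \<union> P \<longleftrightarrow> M - {eu, ev} \<subseteq> X"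
    using P ends_notin_M by blast
  then show ?thesis
    unfolding two_factor_def two_factor_off_def edge_set_iff[OF X P] degree_two_iff[OF X P]
    by argo
qed

lemma card_two_factor_extensions:
  assumes X: "X \<subseteq> outer_darts"
  shows "card {P \<in> Pow ends. two_factor H (X \<union> {eu, ev} \<union> P) \<and> M \<subseteq> X \<union> {eu, ev} \<union> P} =
    of_bool (two_factor_off H (M - {eu, ev}) {u, v} ends X) *
    card {P \<in> end_choices. compatible_ends (opp H) ends X P}"
proof -
  have "{P \<in> Pow ends. two_factor H (X \<union> {eu, ev} \<union> P) \<and> M \<subseteq> X \<union> {eu, ev} \<union> P} =
      {P \<in> Pow ends. two_factor_off H (M - {eu, ev}) {u, v} ends X \<and>
        compatible_ends (opp H) ends X P \<and> P \<in> end_choices}"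
    using two_factor_extension_iff[OF X] by (intro Collect_cong) (meson PowD)
  also have "\<dots> = (if two_factor_off H (M - {eu, ev}) {u, v} ends X
      then {P \<in> end_choices. compatible_ends (opp H) ends X P} else {})"
    by auto
  finally show ?thesis by simp
qed

lemma num_2factors_eq_sum:
  "num_2factors H M = (\<Sum>X\<in>Pow outer_darts.
     of_bool (two_factor_off H (M - {eu, ev}) {u, v} ends X) *
     card {P \<in> end_choices. compatible_ends (opp H) ends X P})"
proof -
  have "finite (darts H)" using multigraph by (simp add: multigraph_def)
  moreover have "\<forall>F\<in>{F. two_factor H F \<and> M \<subseteq> F}. {eu, ev} \<subseteq> F \<and> F \<subseteq> outer_darts \<union> {eu, ev} \<union> ends"
    using eu_in_M ev_in_M by (auto simp: two_factor_def edge_set_def)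
  ultimately show ?thesis
    unfolding num_2factors_def
    by (subst card_eq_sum_Pow_slices[where D = outer_darts and E = "{eu, ev}" and R = ends])
       (use distinct_darts card_two_factor_extensions in auto)
qed

lemma num_2factors_join_graph:
  assumes ends: "{a, b, c, d} = ends"
  shows "num_2factors (join_graph H u v eu ev a b c d) (M - {eu, ev}) =
    card {X \<in> Pow outer_darts. two_factor_off H (M - {eu, ev}) {u, v} ends X \<and>
      joins_compatible (opp H) ends (pairswap a b c d) X}"
proof -
  let ?J = "join_graph H u v eu ev a b c d"
  have J: "darts ?J = outer_darts" "verts ?J = verts H - {u, v}"
      "opp ?J = splice (opp H) ends (pairswap a b c d)"
    using ends by (auto simp: join_graph_def)
  have darts_at_J: "darts_at ?J w = darts_at H w" if "w \<in> verts H - {u, v}" for w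
    using darts_at_other[of w] that J(1) unfolding darts_at_def by (auto simp: join_graph_def)
  have "two_factor ?J X \<and> M - {eu, ev} \<subseteq> X \<longleftrightarrow> X \<in> Pow outer_darts \<and>
      two_factor_off H (M - {eu, ev}) {u, v} ends X \<and> joins_compatible (opp H) ends (pairswap a b c d) X"
    for X
  proof (cases "X \<subseteq> outer_darts")
    case True
    have "(\<forall>h\<in>X. splice (opp H) ends (pairswap a b c d) h \<in> X) \<longleftrightarrow>
        (\<forall>h\<in>X. opp H h \<notin> ends \<longrightarrow> opp H h \<in> X) \<and> joins_compatible (opp H) ends (pairswap a b c d) X"
      by (rule splice_closed_iff) (use True local_darts opp_opp in auto)
    then show ?thesis
      using True darts_at_J unfolding two_factor_def edge_set_def two_factor_off_def J by auto
  next
    case False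
    then show ?thesis unfolding two_factor_def edge_set_def J by auto
  qed
  then show ?thesis unfolding num_2factors_def by simp
qed

lemma darts_at_IH_move:
  "darts_at (H\<lparr>vert := (vert H)(y1 := u, x2 := v)\<rparr>) w =
    darts_at H w - {y1, x2} \<union> (if w = u then {y1} else {}) \<union> (if w = v then {x2} else {})"
  using local_darts u_neq_v distinct_darts by (auto simp: darts_at_def)

lemma IH_move: "matched_edge (H\<lparr>vert := (vert H)(y1 := u, x2 := v)\<rparr>) M eu ev u v x1 y1 x2 y2"
proof
  show "multigraph (H\<lparr>vert := (vert H)(y1 := u, x2 := v)\<rparr>)"
    using multigraph u_v_in_verts by (simp add: multigraph_def)
  show "darts_at (H\<lparr>vert := (vert H)(y1 := u, x2 := v)\<rparr>) u = {eu, x1, y1}"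
    and "darts_at (H\<lparr>vert := (vert H)(y1 := u, x2 := v)\<rparr>) v = {ev, x2, y2}"
    unfolding darts_at_IH_move darts_at_u darts_at_v using u_neq_v distinct_darts by auto
qed (use matching_darts eu_in_M ev_in_M opp_eu distinct_darts ends_notin_M in auto)

lemma two_factor_off_IH_move:
  "two_factor_off (H\<lparr>vert := (vert H)(y1 := u, x2 := v)\<rparr>) N {u, v} R X = two_factor_off H N {u, v} R X"
proof -
  have "darts_at (H\<lparr>vert := (vert H)(y1 := u, x2 := v)\<rparr>) w = darts_at H w" if "w \<notin> {u, v}" for w
    using that darts_at_other[OF that] unfolding darts_at_IH_move by auto
  then show ?thesis unfolding two_factor_off_def by simp
qed

lemma compatible_end_choices_diff:
  assumes X: "X \<subseteq> outer_darts"
    and nc_I: "\<not> splice_closes (opp H) ends (pairswap x1 y1 x2 y2)"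
    and nc_eq: "\<not> splice_closes (opp H) ends (pairswap x1 x2 y1 y2)"
  shows "int (card {P \<in> end_choices. compatible_ends (opp H) ends X P})
      - int (card {P \<in> {{x1, x2}, {x1, y2}, {y1, x2}, {y1, y2}}. compatible_ends (opp H) ends X P})
    = of_bool (joins_compatible (opp H) ends (pairswap x1 y1 x2 y2) X)
      - of_bool (joins_compatible (opp H) ends (pairswap x1 x2 y1 y2) X)"
proof -
  let ?Q = "compatible_ends (opp H) ends X"
  have "distinct [{x1, y1}, {x1, y2}, {x2, y1}, {x2, y2}]"
    and "distinct [{x1, x2}, {x1, y2}, {y1, x2}, {y1, y2}]"
    using distinct_darts by (auto simp: doubleton_eq_iff)
  note cards = this[THEN card_filter_four[where Q = ?Q]]
  have "\<forall>r\<in>ends. opp H (opp H r) = r \<and> opp H r \<noteq> r"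
    using multigraph local_darts by (auto simp: multigraph_def)
  moreover have "\<forall>r\<in>ends. r \<notin> X" using X by auto
  ultimately have "of_bool (?Q {x1, y1}) + of_bool (?Q {x2, y2}) - of_bool (?Q {x1, x2}) - of_bool (?Q {y1, y2})
      = (of_bool (joins_compatible (opp H) ends (pairswap x1 y1 x2 y2) X)
        - of_bool (joins_compatible (opp H) ends (pairswap x1 x2 y1 y2) X) :: int)"
    using four_term_identity[of x1 x2 y1 y2 "opp H" X] distinct_darts nc_I nc_eq by simp
  moreover have "{y1, x2} = {x2, y1}" by auto
  ultimately show ?thesis unfolding cards by simp
qed

lemma num_2factors_IH_move:
  assumes nc_I: "\<not> splice_closes (opp H) ends (pairswap x1 y1 x2 y2)"
    and nc_eq: "\<not> splice_closes (opp H) ends (pairswap x1 x2 y1 y2)"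
  shows "int (num_2factors H M) - int (num_2factors (H\<lparr>vert := (vert H)(y1 := u, x2 := v)\<rparr>) M)
    = int (num_2factors (join_graph H u v eu ev x1 y1 x2 y2) (M - {eu, ev}))
      - int (num_2factors (join_graph H u v eu ev x1 x2 y1 y2) (M - {eu, ev}))"
proof -
  interpret moved: matched_edge "H\<lparr>vert := (vert H)(y1 := u, x2 := v)\<rparr>" M eu ev u v x1 y1 x2 y2
    by (rule IH_move)
  let ?off = "two_factor_off H (M - {eu, ev}) {u, v} ends"
  have same: "{x1, y1, x2, y2} = ends" "{eu, ev, x1, y1, x2, y2} = {eu, ev, x1, x2, y1, y2}" by auto
  have "int (num_2factors H M) - int (num_2factors (H\<lparr>vert := (vert H)(y1 := u, x2 := v)\<rparr>) M)
      = (\<Sum>X\<in>Pow outer_darts. of_bool (?off X) *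
          (int (card {P \<in> end_choices. compatible_ends (opp H) ends X P})
           - int (card {P \<in> {{x1, x2}, {x1, y2}, {y1, x2}, {y1, y2}}. compatible_ends (opp H) ends X P})))"
    unfolding num_2factors_eq_sum moved.num_2factors_eq_sum two_factor_off_IH_move same
    by (simp add: sum_subtractf right_diff_distrib)
  also have "\<dots> = (\<Sum>X\<in>Pow outer_darts.
      of_bool (?off X \<and> joins_compatible (opp H) ends (pairswap x1 y1 x2 y2) X)
      - of_bool (?off X \<and> joins_compatible (opp H) ends (pairswap x1 x2 y1 y2) X))"
    using compatible_end_choices_diff[OF _ nc_I nc_eq] by (intro sum.cong) auto
  also have "\<dots> = int (num_2factors (join_graph H u v eu ev x1 y1 x2 y2) (M - {eu, ev}))
      - int (num_2factors (join_graph H u v eu ev x1 x2 y1 y2) (M - {eu, ev}))"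
    using multigraph by (simp add: num_2factors_join_graph same sum_subtractf Int_def multigraph_def)
  finally show ?thesis .
qed

end

lemma perfect_matching_unique:
  assumes "perfect_matching G M" "w \<in> verts G"
    and "h \<in> darts_at G w \<inter> M" "h' \<in> darts_at G w \<inter> M"
  shows "h = h'"
proof -
  obtain x where "darts_at G w \<inter> M = {x}"
    using assms(1,2) by (auto simp: perfect_matching_def card_1_singleton_iff)
  then show ?thesis using assms(3,4) by auto
qed

lemma matched_edge_of_trivalent:
  assumes mg: "multigraph G" and tri: "trivalent G" and pm: "perfect_matching G M"
    and eu: "eu \<in> M" "ev = opp G eu" "u = vert G eu" "v = vert G ev"
    and at_u: "darts_at G u = {eu, \<alpha>, \<beta>}" and at_v: "darts_at G v = {ev, \<gamma>, \<delta>}"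
  shows "matched_edge G M eu ev u v \<alpha> \<beta> \<gamma> \<delta>"
proof -
  have M: "M \<subseteq> darts G" "ev \<in> M"
    using pm eu by (auto simp: perfect_matching_def edge_set_def)
  have "eu \<in> darts G" using M eu by auto
  then have "eu \<noteq> ev" "u \<in> verts G" "v \<in> verts G"
    using mg unfolding eu(2-4) multigraph_def by auto
  have "distinct [eu, \<alpha>, \<beta>]" "distinct [ev, \<gamma>, \<delta>]"
    using tri \<open>u \<in> verts G\<close> \<open>v \<in> verts G\<close> at_u at_v
    by (auto simp: trivalent_def card_insert_if split: if_splits)
  have "u \<noteq> v"
  proof
    assume "u = v"
    then have "eu \<in> darts_at G u \<inter> M" "ev \<in> darts_at G u \<inter> M"
      using at_u at_v eu(1) M(2) by auto
    then show False using perfect_matching_unique[OF pm \<open>u \<in> verts G\<close>] \<open>eu \<noteq> ev\<close> by blast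
  qed
  then have "distinct [eu, ev, \<alpha>, \<beta>, \<gamma>, \<delta>]"
    using \<open>distinct [eu, \<alpha>, \<beta>]\<close> \<open>distinct [ev, \<gamma>, \<delta>]\<close> at_u at_v by (auto simp: darts_at_def)
  moreover have "M \<inter> {\<alpha>, \<beta>, \<gamma>, \<delta>} = {}"
    using perfect_matching_unique[OF pm \<open>u \<in> verts G\<close>, of eu] perfect_matching_unique[OF pm \<open>v \<in> verts G\<close>, of ev]
      calculation eu M at_u at_v by auto
  ultimately show ?thesis
    using mg M eu at_u at_v by unfold_locales auto
qed

lemma trivalent_num_2factors_IH_move:
  assumes "multigraph G" "trivalent G" "perfect_matching G M"
    and "eu \<in> M" "ev = opp G eu" "u = vert G eu" "v = vert G ev"
    and "darts_at G u = {eu, \<alpha>, \<beta>}" "darts_at G v = {ev, \<gamma>, \<delta>}"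
    and "\<not> splice_closes (opp G) {\<alpha>, \<beta>, \<gamma>, \<delta>} (pairswap \<alpha> \<gamma> \<beta> \<delta>)"
    and "\<not> splice_closes (opp G) {\<alpha>, \<beta>, \<gamma>, \<delta>} (pairswap \<alpha> \<beta> \<gamma> \<delta>)"
  shows "int (num_2factors G M) - int (num_2factors (G\<lparr>vert := (vert G)(\<gamma> := u, \<beta> := v)\<rparr>) M)
    = int (num_2factors (join_graph G u v eu ev \<alpha> \<gamma> \<beta> \<delta>) (M - {eu, ev}))
      - int (num_2factors (join_graph G u v eu ev \<alpha> \<beta> \<gamma> \<delta>) (M - {eu, ev}))"
proof -
  interpret matched_edge G M eu ev u v \<alpha> \<beta> \<gamma> \<delta>
    using assms by (intro matched_edge_of_trivalent)
  show ?thesis using assms(10,11) by (rule num_2factors_IH_move)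
qed

theorem lemma2p3:
  shows
  "(\<forall>(\<Gamma> :: ('p, 'e) pmdrawing) e \<alpha> \<beta> \<gamma> \<delta>.
      pm_drawing \<Gamma> \<and> e \<in> medges \<Gamma> \<and> quad \<Gamma> e = (\<alpha>, \<beta>, \<gamma>, \<delta>) \<longrightarrow>
      bracket2 \<Gamma> - bracket2 (\<Gamma>\<lparr>quad := (quad \<Gamma>)(e := (\<gamma>, \<alpha>, \<delta>, \<beta>))\<rparr>)
      = bracket2 (\<Gamma>\<lparr>arcs := arcs \<Gamma> @ [(\<alpha>, \<gamma>), (\<beta>, \<delta>)], medges := medges \<Gamma> - {e}\<rparr>)
        - bracket2 (\<Gamma>\<lparr>arcs := arcs \<Gamma> @ [(\<alpha>, \<beta>), (\<gamma>, \<delta>)], medges := medges \<Gamma> - {e}\<rparr>))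
   \<and>
   (\<forall>(G1 :: ('v, 'h) dgraph) rot M1 eu ev u v \<alpha> \<beta> \<gamma> \<delta>.
      multigraph G1 \<and> trivalent G1 \<and> plane_embedding G1 rot \<and> perfect_matching G1 M1 \<and>
      eu \<in> M1 \<and> ev = opp G1 eu \<and> u = vert G1 eu \<and> v = vert G1 ev \<and>
      darts_at G1 u = {eu, \<alpha>, \<beta>} \<and> darts_at G1 v = {ev, \<gamma>, \<delta>} \<and>
      ((rot eu = \<alpha> \<and> rot ev = \<delta>) \<or> (rot eu = \<beta> \<and> rot ev = \<gamma>)) \<and>
      \<not> splice_closes (opp G1) {\<alpha>, \<beta>, \<gamma>, \<delta>} (pairswap \<alpha> \<gamma> \<beta> \<delta>) \<and>
      \<not> splice_closes (opp G1) {\<alpha>, \<beta>, \<gamma>, \<delta>} (pairswap \<alpha> \<beta> \<gamma> \<delta>) \<longrightarrow>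
      int (num_2factors G1 M1)
        - int (num_2factors (G1\<lparr>vert := (vert G1)(\<gamma> := u, \<beta> := v)\<rparr>) M1)
      = int (num_2factors (join_graph G1 u v eu ev \<alpha> \<gamma> \<beta> \<delta>) (M1 - {eu, ev}))
        - int (num_2factors (join_graph G1 u v eu ev \<alpha> \<beta> \<gamma> \<delta>) (M1 - {eu, ev})))"
  by (intro conjI allI impI; elim conjE; rule bracket2_IH_move trivalent_num_2factors_IH_move; assumption)

end
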